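(* Let $K$ be a valued field, $d\ge 1$, and $X\subseteq K^d$. Suppose that for all $x,y,z\in X$ and all $\alpha,\beta,\gamma\in\mathcal{O}$ with $\alpha+\beta+\gamma=1$ we have $\alpha x+\beta y+\gamma z\in X$. Then $X$ is convex.
   Context: $K$ is a field with a (Krull) valuation $\nu:K\to\Gamma\cup\{\infty\}$, valuation ring $\mathcal{O}=\{x:\nu(x)\ge 0\}$, maximal ideal $\mathfrak{m}=\{x:\nu(x)>0\}$ and residue field $k=\mathcal{O}/\mathfrak{m}$. A set $X\subseteq K^d$ is convex if for every $n\ge 1$, all $x_1,\dots,x_n\in X$ and all $\alpha_1,\dots,\alpha_n\in\mathcal{O}$ with $\alpha_1+\dots+\alpha_n=1$, we have $\alpha_1x_1+\dots+\alpha_nx_n\in X$ (such a sum is called a convex combination). *)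

theory Defs
  imports "HOL-Analysis.Analysis"
begin

text \<open>The value at 0 is the formal element infinity; we model nu on the nonzero
  elements only (the value nu 0 is irrelevant and never used).\<close>

definition valuation :: "('k::field \<Rightarrow> 'g::linordered_ab_group_add) \<Rightarrow> bool" where
  "valuation \<nu> \<longleftrightarrow>
     (\<forall>x y. x \<noteq> 0 \<and> y \<noteq> 0 \<longrightarrow> \<nu> (x * y) = \<nu> x + \<nu> y) \<and>
     (\<forall>x y. x \<noteq> 0 \<and> y \<noteq> 0 \<and> x + y \<noteq> 0 \<longrightarrow> min (\<nu> x) (\<nu> y) \<le> \<nu> (x + y))"

definition val_ring :: "('k::field \<Rightarrow> 'g::linordered_ab_group_add) \<Rightarrow> 'k set" where
  "val_ring \<nu> = {x. x = 0 \<or> 0 \<le> \<nu> x}"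

text \<open>Scalar multiplication on K^d, with d the cardinality of the finite index type 'n.\<close>

definition vsmult :: "'k::field \<Rightarrow> 'k ^ 'n \<Rightarrow> 'k ^ 'n" where
  "vsmult a x = (\<chi> i. a * x $ i)"

definition val_convex :: "('k::field \<Rightarrow> 'g::linordered_ab_group_add) \<Rightarrow> ('k ^ 'n) set \<Rightarrow> bool" where
  "val_convex \<nu> X \<longleftrightarrow>
     (\<forall>n::nat. \<forall>x :: nat \<Rightarrow> 'k ^ 'n. \<forall>\<alpha> :: nat \<Rightarrow> 'k.
        n \<ge> 1 \<longrightarrow> (\<forall>i<n. x i \<in> X) \<longrightarrow> (\<forall>i<n. \<alpha> i \<in> val_ring \<nu>) \<longrightarrow>
        (\<Sum>i<n. \<alpha> i) = 1 \<longrightarrow> (\<Sum>i<n. vsmult (\<alpha> i) (x i)) \<in> X)"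

end

theory Submission
  imports Defs
begin

text \<open>Fix a base point \<open>z \<in> X\<close>. Choosing the coefficients \<open>1, a, -a\<close> in the hypothesis shows
  that \<open>X\<close> is closed under \<open>w \<mapsto> w + a (x - z)\<close> for \<open>x \<in> X\<close> and \<open>a \<in> \<O>\<close>; iterating,
  \<open>z + \<Sum> a\<^sub>i (x\<^sub>i - z) \<in> X\<close>. For \<open>z = x\<^sub>0\<close> and \<open>\<Sum> \<alpha>\<^sub>i = 1\<close> this point is the
  convex combination \<open>\<Sum> \<alpha>\<^sub>i x\<^sub>i\<close>.\<close>

lemma valuation_one:
  assumes "valuation \<nu>"
  shows "\<nu> (1::'k::field) = (0::'g::linordered_ab_group_add)"
proof -
  have "\<nu> ((1::'k) * 1) = \<nu> 1 + \<nu> 1"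
    using assms unfolding valuation_def by (metis one_neq_zero)
  then show ?thesis by simp
qed

lemma valuation_minus_one:
  assumes "valuation \<nu>"
  shows "\<nu> (-1::'k::field) = (0::'g::linordered_ab_group_add)"
proof -
  have "\<nu> ((-1::'k) * -1) = \<nu> (-1) + \<nu> (-1)"
    using assms unfolding valuation_def by (metis neg_equal_0_iff_equal one_neq_zero)
  then show ?thesis using valuation_one[OF assms] by simp
qed

lemma one_in_val_ring:
  assumes "valuation \<nu>"
  shows "1 \<in> val_ring \<nu>"
  using valuation_one[OF assms] unfolding val_ring_def by simp

lemma uminus_in_val_ring:
  assumes "valuation \<nu>" and "a \<in> val_ring \<nu>"
  shows "-a \<in> val_ring \<nu>"
proof (cases "a = 0")
  case False
  then have "\<nu> ((-1) * a) = \<nu> (-1) + \<nu> a"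
    using assms(1) unfolding valuation_def by (metis neg_equal_0_iff_equal one_neq_zero)
  then show ?thesis
    using assms False valuation_minus_one[OF assms(1)] unfolding val_ring_def by simp
qed (simp add: val_ring_def)

lemma sum_vsmult_rebase:
  fixes x :: "nat \<Rightarrow> 'k::field ^ 'n"
  assumes "(\<Sum>i<Suc m. \<alpha> i) = 1"
  shows "(\<Sum>i<Suc m. vsmult (\<alpha> i) (x i))
           = x 0 + (\<Sum>i<m. vsmult (\<alpha> (Suc i)) (x (Suc i) - x 0))"
proof -
  have \<alpha>0: "\<alpha> 0 = 1 - (\<Sum>i<m. \<alpha> (Suc i))"
    using assms by (simp only: sum.lessThan_Suc_shift eq_diff_eq)
  show ?thesis
    unfolding vec_eq_iff sum_component vsmult_def sum.lessThan_Suc_shift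
    by (simp del: sum.lessThan_Suc
        add: \<alpha>0 algebra_simps sum_subtractf sum_distrib_left sum_distrib_right)
qed

context
  fixes \<nu> :: "'k::field \<Rightarrow> 'g::linordered_ab_group_add"
    and X :: "('k ^ 'n) set"
  assumes valuation: "valuation \<nu>"
    and closed3: "\<forall>x\<in>X. \<forall>y\<in>X. \<forall>z\<in>X. \<forall>\<alpha>\<in>val_ring \<nu>. \<forall>\<beta>\<in>val_ring \<nu>. \<forall>\<gamma>\<in>val_ring \<nu>.
           \<alpha> + \<beta> + \<gamma> = 1 \<longrightarrow> vsmult \<alpha> x + vsmult \<beta> y + vsmult \<gamma> z \<in> X"
begin

lemma add_vsmult_diff_in:
  assumes "w \<in> X" "x \<in> X" "z \<in> X" "a \<in> val_ring \<nu>"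
  shows "w + vsmult a (x - z) \<in> X"
proof -
  have "vsmult 1 w + vsmult a x + vsmult (-a) z \<in> X"
    using closed3 assms one_in_val_ring[OF valuation] uminus_in_val_ring[OF valuation] by simp
  moreover have "vsmult 1 w + vsmult a x + vsmult (-a) z = w + vsmult a (x - z)"
    by (simp add: vec_eq_iff vsmult_def algebra_simps)
  ultimately show ?thesis by simp
qed

lemma add_sum_vsmult_diff_in:
  fixes m :: nat
  assumes "z \<in> X" "\<forall>i<m. x i \<in> X" "\<forall>i<m. a i \<in> val_ring \<nu>"
  shows "z + (\<Sum>i<m. vsmult (a i) (x i - z)) \<in> X"
  using assms
proof (induction m)
  case (Suc m)
  then have "z + (\<Sum>i<m. vsmult (a i) (x i - z)) + vsmult (a m) (x m - z) \<in> X"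
    by (intro add_vsmult_diff_in) simp_all
  then show ?case by (simp add: add.assoc)
qed simp

end

theorem proposition2p5:
  fixes \<nu> :: "'k::field \<Rightarrow> 'g::linordered_ab_group_add"
    and X :: "('k ^ 'n) set"
  assumes "valuation \<nu>"
    and "\<forall>x\<in>X. \<forall>y\<in>X. \<forall>z\<in>X. \<forall>\<alpha>\<in>val_ring \<nu>. \<forall>\<beta>\<in>val_ring \<nu>. \<forall>\<gamma>\<in>val_ring \<nu>.
           \<alpha> + \<beta> + \<gamma> = 1 \<longrightarrow> vsmult \<alpha> x + vsmult \<beta> y + vsmult \<gamma> z \<in> X"
  shows "val_convex \<nu> X"
  unfolding val_convex_def
proof (intro allI impI)
  fix n :: nat and x :: "nat \<Rightarrow> 'k ^ 'n" and \<alpha> :: "nat \<Rightarrow> 'k"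
  assume "n \<ge> 1" and xs: "\<forall>i<n. x i \<in> X" and \<alpha>s: "\<forall>i<n. \<alpha> i \<in> val_ring \<nu>"
    and sum1: "(\<Sum>i<n. \<alpha> i) = 1"
  then obtain m where n: "n = Suc m" by (cases n) auto
  have "x 0 + (\<Sum>i<m. vsmult (\<alpha> (Suc i)) (x (Suc i) - x 0)) \<in> X"
    using add_sum_vsmult_diff_in[OF assms, of "x 0" m "\<lambda>i. x (Suc i)" "\<lambda>i. \<alpha> (Suc i)"] xs \<alpha>s n
    by simp
  then show "(\<Sum>i<n. vsmult (\<alpha> i) (x i)) \<in> X"
    using sum_vsmult_rebase[of \<alpha> m x] sum1 n by simp
qed

end
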